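(* Let $b\ge2$ and $d\in\{0,\dots,b-1\}$. If $d\ne0$, the sequence $(H^{(k)})_{k\ge1}$ is strictly decreasing; if $d=0$, the sequence $(H^{(k)})_{k\ge0}$ is strictly decreasing. In both cases $\lim_{k\to\infty}H^{(k)}=b\log b$.
   Context: For an integer $n\ge0$, its (minimal) base-$b$ representation is the string of base-$b$ digits of $n$ without leading zeros (the empty string for $n=0$); $k(n)$ denotes the number of occurrences of the digit $d$ in this representation. For $k\ge0$, the Irwin sum is $H^{(k)}=\sum_{n\ge1,\ k(n)=k}1/n$. *)

theory Defs
  imports "HOL-Analysis.Analysis"
begin

text \<open>Number of occurrences of digit d in the minimal base-b representation of n
  (no leading zeros; the representation of 0 is empty).\<close>
fun digit_count :: "nat \<Rightarrow> nat \<Rightarrow> nat \<Rightarrow> nat" where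
  "digit_count b d n =
     (if n = 0 \<or> b < 2 then 0
      else (if n mod b = d then 1 else 0) + digit_count b d (n div b))"

definition irwin_sum :: "nat \<Rightarrow> nat \<Rightarrow> nat \<Rightarrow> real" where
  "irwin_sum b d k = infsum (\<lambda>n. 1 / real n) {n. n \<ge> 1 \<and> digit_count b d n = k}"

end

theory Submission
  imports Defs
begin

text \<open>
  Let \<open>\<psi> n = ln (n + 1) - ln n\<close>, the length of \<open>[n, n + 1]\<close> for the measure \<open>dx/x\<close>.
  By scale invariance \<open>(\<Sum>j<b. \<psi> (b m + j)) = \<psi> m\<close>, so the sum of \<open>\<psi>\<close> over all numbers with
  at most \<open>k\<close> digits \<open>d\<close> telescopes along the \<open>b\<close>-ary tree of digit strings: the only mass lost
  at a node \<open>m\<close> is that of its child \<open>b m + d\<close> when \<open>m\<close> has exactly \<open>k\<close> digits \<open>d\<close>. Hence the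
  sum of \<open>\<psi> (b m + d)\<close> over all \<open>m\<close> with exactly \<open>k \<ge> 1\<close> digits \<open>d\<close> equals
  \<open>(\<Sum>j<b. \<psi> j) = ln b\<close>. As \<open>0 \<le> 1/m - b \<psi> (b m + d) \<le> 1/m\<^sup>2\<close> and every such \<open>m\<close> is at least
  \<open>b ^ (k - 1)\<close>, this gives \<open>b ln b \<le> H k \<le> b ln b + H k / b ^ (k - 1)\<close>; convergence of the
  series comes from the same telescoping, which bounds the partial sums.

  For monotonicity, group the terms of \<open>H (k + 1)\<close> by the parent \<open>m = n div b\<close>: a child
  \<open>b m + j\<close> contributes at most \<open>1 / (b m)\<close>, and it has \<open>k + 1\<close> digits \<open>d\<close> iff \<open>m\<close> has \<open>k\<close> of
  them (if \<open>j = d\<close>) or \<open>k + 1\<close> (if \<open>j \<noteq> d\<close>). This yields \<open>b H (k + 1) < H k + (b - 1) H (k + 1)\<close>,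
  strictly because some child has last digit \<open>j \<ge> 1\<close>. Since then \<open>H k \<le> H 1\<close>, the bounds above
  squeeze \<open>H k\<close> to \<open>b ln b\<close>.
\<close>

declare digit_count.simps [simp del]

lemma digit_count_0 [simp]: "digit_count b d 0 = 0"
  by (simp add: digit_count.simps)

lemma digit_count_snoc:
  assumes "2 \<le> b" "j < b" "0 < b * m + j"
  shows "digit_count b d (b * m + j) = digit_count b d m + (if j = d then 1 else 0)"
  using assms by (subst digit_count.simps) simp

lemma digit_count_less_power:
  assumes "2 \<le> b" "n < b ^ L"
  shows "digit_count b d n \<le> L"
  using assms(2)
proof (induction L arbitrary: n)
  case (Suc L)
  show ?case
  proof (cases "n = 0")
    case False
    have "n div b < b ^ L"
      using Suc.prems assms(1) by (simp add: div_less_iff_less_mult mult.commute)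
    with Suc.IH have "digit_count b d (n div b) \<le> L" .
    with False assms(1) show ?thesis by (subst digit_count.simps) simp
  qed simp
qed simp

lemma power_le_of_digit_count:
  assumes "2 \<le> b" "1 \<le> digit_count b d n"
  shows "b ^ (digit_count b d n - 1) \<le> n"
  using digit_count_less_power[OF assms(1), of n "digit_count b d n - 1" d] assms(2)
  by (meson diff_less less_one not_le order_less_le_trans)

lemma ex_digit_count:
  assumes "2 \<le> b" "d < b" "1 \<le> k"
  shows "\<exists>m>0. digit_count b d m = k"
  using assms(3)
proof (induction k rule: dec_induct)
  case base
  show ?case
  proof (cases "d = 0")
    case True
    then have "digit_count b d b = 1"
      using assms digit_count_snoc[OF assms(1), of 0 1 d] digit_count_snoc[OF assms(1), of 1 0 d]
      by simp
    with assms(1) show ?thesis by (intro exI[of _ b]) simp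
  next
    case False
    then show ?thesis
      using assms digit_count_snoc[OF assms(1), of d 0 d] by (intro exI[of _ d]) simp
  qed
next
  case (step k)
  then obtain m where "0 < m" "digit_count b d m = k" by blast
  then show ?case
    using assms digit_count_snoc[OF assms(1), of d m d] by (intro exI[of _ "b * m + d"]) simp
qed

definition log_length :: "nat \<Rightarrow> real" where
  "log_length n = ln (real (Suc n)) - ln (real n)"

lemma log_length_0 [simp]: "log_length 0 = 0"
  by (simp add: log_length_def)

lemma sum_log_length: "(\<Sum>j<c. log_length (a + j)) = ln (real (a + c)) - ln (real a)"
proof -
  have "(\<Sum>j<c. log_length (a + j)) = (\<Sum>j<c. ln (real (a + Suc j)) - ln (real (a + j)))"
    by (simp add: log_length_def)
  also have "\<dots> = ln (real (a + c)) - ln (real (a + 0))"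
    by (rule sum_lessThan_telescope)
  finally show ?thesis by simp
qed

lemma sum_log_length_block:
  assumes "0 < b" "0 < m"
  shows "(\<Sum>j<b. log_length (b * m + j)) = log_length m"
proof -
  have "real (b * m + b) = real b * real (Suc m)"
    by (simp add: algebra_simps)
  then have "ln (real (b * m + b)) - ln (real (b * m)) = log_length m"
    using assms by (simp add: log_length_def ln_mult)
  then show ?thesis
    by (simp add: sum_log_length)
qed

lemma log_length_le: "log_length n \<le> 1 / real n"
proof (cases "n = 0")
  case False
  then have "1 + 1 / real n = real (Suc n) / real n"
    by (simp add: field_simps)
  with False have "log_length n = ln (1 + 1 / real n)"
    by (simp add: log_length_def ln_div)
  also have "\<dots> \<le> 1 / real n"
    by (rule ln_add_one_self_le_self) simp
  finally show ?thesis .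
qed (simp add: log_length_def)

lemma log_length_ge:
  assumes "0 < n"
  shows "1 / real (Suc n) \<le> log_length n"
proof -
  have "ln (real n / real (Suc n)) \<le> real n / real (Suc n) - 1"
    using assms by (intro ln_le_minus_one) simp
  moreover have "ln (real n / real (Suc n)) = - log_length n"
    using assms by (simp add: log_length_def ln_div)
  moreover have "real n / real (Suc n) - 1 = - (1 / real (Suc n))"
    by (simp add: field_simps)
  ultimately show ?thesis by linarith
qed

lemma log_length_nonneg: "0 \<le> log_length n"
  using log_length_ge[of n] by (cases "n = 0") (auto simp: log_length_def intro: order_trans[rotated])

lemma log_length_scaled_le:
  assumes "0 < n"
  shows "real b * log_length (b * n + d) \<le> 1 / real n"
proof (cases "b = 0")
  case False
  have "real b * log_length (b * n + d) \<le> real b * (1 / real (b * n + d))"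
    by (intro mult_left_mono log_length_le) simp
  also have "\<dots> \<le> real b * (1 / real (b * n))"
    using assms False by (intro mult_left_mono divide_left_mono) (auto intro!: mult_pos_pos add_pos_nonneg)
  also have "\<dots> = 1 / real n"
    using False by simp
  finally show ?thesis .
qed simp

lemma inverse_minus_log_length_scaled_le:
  assumes "0 < n" "d < b"
  shows "1 / real n - real b * log_length (b * n + d) \<le> 1 / real n ^ 2"
proof -
  have "real b * (1 / real (Suc (b * n + d))) \<le> real b * log_length (b * n + d)"
    using assms by (intro mult_left_mono log_length_ge) auto
  moreover have "1 / real n - real b / real (Suc (b * n + d)) \<le> 1 / real n ^ 2"
  proof -
    let ?X = "real (Suc (b * n + d))"
    have "real (d + 1) * real n \<le> real b * real n"
      using assms by (intro mult_right_mono) auto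
    then have "real n * (real d + 1) \<le> ?X"
      by (simp add: algebra_simps)
    have "1 / real n - real b / ?X = (real d + 1) / (real n * ?X)"
      using assms by (simp add: divide_simps del: of_nat_Suc) (simp add: algebra_simps)
    also have "\<dots> \<le> (real d + 1) / (real n * (real n * (real d + 1)))"
      using assms \<open>real n * (real d + 1) \<le> ?X\<close>
      by (intro divide_left_mono mult_left_mono) (auto simp del: of_nat_Suc intro!: mult_pos_pos)
    also have "\<dots> = 1 / real n ^ 2"
      by (simp add: power2_eq_square)
    finally show ?thesis .
  qed
  ultimately show ?thesis by simp
qed

lemma sum_block_recursion:
  fixes G P :: "nat \<Rightarrow> real"
  assumes "G 0 = 0" "P 0 = 0"
    and rec: "\<And>m. 0 < m \<Longrightarrow> (\<Sum>j<b. G (b * m + j)) = G m - P m"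
    and "0 < N"
  shows "(\<Sum>m<N. P m) = (\<Sum>j<b. G j) + (\<Sum>n<N. G n) - (\<Sum>n<b * N. G n)"
proof -
  have block: "(\<Sum>n\<in>{m * b..<m * b + b}. G n) = G m - P m + (if m = 0 then \<Sum>j<b. G j else 0)" for m
  proof -
    have "(\<Sum>n\<in>{m * b..<m * b + b}. G n) = (\<Sum>j<b. G (b * m + j))"
      by (simp add: sum.atLeastLessThan_shift_0 atLeast0LessThan mult.commute)
    then show ?thesis
      using assms(1,2) rec[of m] by (cases "m = 0") simp_all
  qed
  have "(\<Sum>n<b * N. G n) = (\<Sum>m<N. \<Sum>n\<in>{m * b..<m * b + b}. G n)"
    by (simp add: sum.nat_group mult.commute)
  also have "\<dots> = (\<Sum>m<N. G m) - (\<Sum>m<N. P m) + (\<Sum>j<b. G j)"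
    using assms(4) by (simp add: block sum.distrib sum_subtractf)
  finally show ?thesis by simp
qed

lemma summable_block_recursion:
  fixes G P :: "nat \<Rightarrow> real"
  assumes "G 0 = 0" "P 0 = 0"
    and rec: "\<And>m. 0 < m \<Longrightarrow> (\<Sum>j<b. G (b * m + j)) = G m - P m"
    and "0 < b" "\<And>n. 0 \<le> G n" "\<And>n. 0 \<le> P n"
  shows "summable P"
proof (rule bounded_imp_summable)
  fix N
  have "(\<Sum>n<Suc N. G n) \<le> (\<Sum>n<b * Suc N. G n)"
    using assms(4,5) mult_le_mono1[of 1 b "Suc N"] by (intro sum_mono2) auto
  then show "(\<Sum>m\<le>N. P m) \<le> (\<Sum>j<b. G j)"
    using sum_block_recursion[OF assms(1-3), of "Suc N"] by (simp add: lessThan_Suc_atMost)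
qed (fact assms)

lemma sums_block_recursion:
  fixes G P :: "nat \<Rightarrow> real"
  assumes "G 0 = 0" "P 0 = 0"
    and rec: "\<And>m. 0 < m \<Longrightarrow> (\<Sum>j<b. G (b * m + j)) = G m - P m"
    and "0 < b" "summable G"
  shows "P sums (\<Sum>j<b. G j)"
proof -
  let ?U = "\<lambda>N. \<Sum>n<N. G n"
  have U: "?U \<longlonglongrightarrow> suminf G"
    using assms(5) by (rule summable_LIMSEQ)
  have "(\<lambda>N. ?U (b * N)) \<longlonglongrightarrow> suminf G"
    using filterlim_compose[OF U mult_nat_left_at_top[OF assms(4)]] by (simp add: o_def)
  with U have "(\<lambda>N. (\<Sum>j<b. G j) + ?U N - ?U (b * N)) \<longlonglongrightarrow> (\<Sum>j<b. G j) + suminf G - suminf G"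
    by (intro tendsto_intros)
  moreover have "\<forall>\<^sub>F N in sequentially. (\<Sum>j<b. G j) + ?U N - ?U (b * N) = (\<Sum>m<N. P m)"
    using eventually_gt_at_top[of 0] by eventually_elim (simp add: sum_block_recursion[OF assms(1-3)])
  ultimately show ?thesis
    unfolding sums_def by (simp add: tendsto_cong)
qed

text \<open>No condition \<open>1 \<le> n\<close> is needed: \<open>1 / real 0 = 0\<close>.\<close>

definition irwin_term :: "nat \<Rightarrow> nat \<Rightarrow> nat \<Rightarrow> nat \<Rightarrow> real" where
  "irwin_term b d k n = (if digit_count b d n = k then 1 / real n else 0)"

definition log_length_upto :: "nat \<Rightarrow> nat \<Rightarrow> nat \<Rightarrow> nat \<Rightarrow> real" where
  "log_length_upto b d k n = (if digit_count b d n \<le> k then log_length n else 0)"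

definition log_length_child :: "nat \<Rightarrow> nat \<Rightarrow> nat \<Rightarrow> nat \<Rightarrow> real" where
  "log_length_child b d k m = (if 0 < m \<and> digit_count b d m = k then log_length (b * m + d) else 0)"

lemma irwin_term_nonneg: "0 \<le> irwin_term b d k n"
  by (simp add: irwin_term_def)

lemma irwin_term_le: "irwin_term b d k n \<le> 1 / real n"
  by (simp add: irwin_term_def)

lemma irwin_term_le_power:
  assumes "2 \<le> b" "1 \<le> k"
  shows "irwin_term b d k n \<le> 1 / real b ^ (k - 1)"
proof (cases "digit_count b d n = k")
  case True
  then have "real b ^ (k - 1) \<le> real n"
    using power_le_of_digit_count[OF assms(1), of d n] assms(2) by (simp flip: of_nat_power)
  with True assms(1) show ?thesis
    by (simp add: irwin_term_def frac_le)
qed (simp add: irwin_term_def)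

lemma log_length_upto_0 [simp]: "log_length_upto b d k 0 = 0"
  by (simp add: log_length_upto_def)

lemma log_length_child_0 [simp]: "log_length_child b d k 0 = 0"
  by (simp add: log_length_child_def)

lemma log_length_upto_block:
  assumes "2 \<le> b" "d < b" "0 < m"
  shows "(\<Sum>j<b. log_length_upto b d k (b * m + j)) = log_length_upto b d k m - log_length_child b d k m"
proof -
  let ?L = "\<lambda>j. log_length (b * m + j)"
  have "log_length_upto b d k (b * m + j)
      = (if digit_count b d m \<le> k then ?L j else 0) - (if j = d \<and> digit_count b d m = k then ?L j else 0)"
    if "j < b" for j
  proof -
    have "digit_count b d (b * m + j) = digit_count b d m + (if j = d then 1 else 0)"
      using assms that by (intro digit_count_snoc) auto
    then show ?thesis
      by (auto simp: log_length_upto_def)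
  qed
  then have "(\<Sum>j<b. log_length_upto b d k (b * m + j))
      = (\<Sum>j<b. if digit_count b d m \<le> k then ?L j else 0) - (\<Sum>j<b. if j = d \<and> digit_count b d m = k then ?L j else 0)"
    by (simp add: sum_subtractf)
  also have "\<dots> = log_length_upto b d k m - log_length_child b d k m"
    using assms sum_log_length_block[of b m]
    by (simp add: log_length_upto_def log_length_child_def if_distrib[of "\<lambda>x. x - _"])
  finally show ?thesis .
qed

lemma sum_log_length_upto_digits:
  assumes "2 \<le> b" "1 \<le> k"
  shows "(\<Sum>j<b. log_length_upto b d k j) = ln (real b)"
proof -
  have "digit_count b d j \<le> k" if "j < b" for j
    using digit_count_less_power[OF assms(1), of j 1 d] that assms(2) by simp
  then have "(\<Sum>j<b. log_length_upto b d k j) = (\<Sum>j<b. log_length j)"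
    by (simp add: log_length_upto_def)
  then show ?thesis
    using sum_log_length[where a = 0 and c = b] by simp
qed

lemma summable_log_length_child:
  assumes "2 \<le> b" "d < b"
  shows "summable (log_length_child b d k)"
proof (rule summable_block_recursion[where G = "log_length_upto b d k" and b = b])
  show "(\<Sum>j<b. log_length_upto b d k (b * m + j)) = log_length_upto b d k m - log_length_child b d k m"
    if "0 < m" for m
    using assms that by (rule log_length_upto_block)
qed (use assms in \<open>simp_all add: log_length_upto_def log_length_child_def log_length_nonneg\<close>)

lemma irwin_term_minus_child_bounds:
  assumes "d < b"
  shows "0 \<le> irwin_term b d k n - real b * log_length_child b d k n"
    and "irwin_term b d k n - real b * log_length_child b d k n \<le> irwin_term b d k n ^ 2"
proof -
  have "0 \<le> irwin_term b d k n - real b * log_length_child b d k n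
      \<and> irwin_term b d k n - real b * log_length_child b d k n \<le> irwin_term b d k n ^ 2"
  proof (cases "0 < n \<and> digit_count b d n = k")
    case True
    then show ?thesis
      using log_length_scaled_le[of n b d] inverse_minus_log_length_scaled_le[of n d b] assms
      by (simp add: irwin_term_def log_length_child_def power_divide)
  qed (auto simp: irwin_term_def log_length_child_def)
  then show "0 \<le> irwin_term b d k n - real b * log_length_child b d k n"
    and "irwin_term b d k n - real b * log_length_child b d k n \<le> irwin_term b d k n ^ 2"
    by auto
qed

lemma summable_irwin_term:
  assumes "2 \<le> b" "d < b"
  shows "summable (irwin_term b d k)"
proof -
  let ?R = "\<lambda>n. irwin_term b d k n - real b * log_length_child b d k n"
  have "?R n \<le> inverse (real n ^ 2)" for n
    using irwin_term_minus_child_bounds(2)[OF assms(2), of k n]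
      power_mono[OF irwin_term_le irwin_term_nonneg, of b d k n 2]
    by (simp add: divide_inverse power_inverse)
  then have "summable ?R"
    using irwin_term_minus_child_bounds(1)[OF assms(2)]
    by (intro summable_comparison_test'[OF inverse_power_summable[of 2], of 0]) auto
  moreover have "summable (\<lambda>n. real b * log_length_child b d k n)"
    by (intro summable_mult summable_log_length_child assms)
  ultimately have "summable (\<lambda>n. ?R n + real b * log_length_child b d k n)"
    by (rule summable_add)
  then show ?thesis by simp
qed

lemma summable_log_length_upto:
  assumes "2 \<le> b" "d < b"
  shows "summable (log_length_upto b d K)"
proof (rule summable_comparison_test'[where g = "\<lambda>n. \<Sum>k\<le>K. irwin_term b d k n" and N = 0])
  show "summable (\<lambda>n. \<Sum>k\<le>K. irwin_term b d k n)"
    by (intro summable_sum summable_irwin_term assms)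
  fix n
  show "norm (log_length_upto b d K n) \<le> (\<Sum>k\<le>K. irwin_term b d k n)"
  proof (cases "digit_count b d n \<le> K")
    case True
    then have "norm (log_length_upto b d K n) \<le> irwin_term b d (digit_count b d n) n"
      by (simp add: log_length_upto_def log_length_nonneg log_length_le irwin_term_def)
    also have "\<dots> \<le> (\<Sum>k\<le>K. irwin_term b d k n)"
      using True by (intro member_le_sum) (auto simp: irwin_term_nonneg)
    finally show ?thesis .
  qed (simp add: log_length_upto_def sum_nonneg irwin_term_nonneg)
qed

lemma log_length_child_sums:
  assumes "2 \<le> b" "d < b" "1 \<le> k"
  shows "log_length_child b d k sums ln (real b)"
  using sums_block_recursion[where G = "log_length_upto b d k" and P = "log_length_child b d k" and b = b]
    assms log_length_upto_block summable_log_length_upto sum_log_length_upto_digits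
  by simp

lemma has_sum_irwin:
  assumes "2 \<le> b" "d < b"
  shows "((\<lambda>n. 1 / real n) has_sum suminf (irwin_term b d k)) {n. 1 \<le> n \<and> digit_count b d n = k}"
proof -
  have "(irwin_term b d k has_sum suminf (irwin_term b d k)) UNIV"
    using summable_irwin_term[OF assms] by (intro sums_nonneg_imp_has_sum) (auto simp: irwin_term_nonneg)
  then show ?thesis
    by (subst has_sum_cong_neutral[where g = "irwin_term b d k" and T = UNIV]) (auto simp: irwin_term_def)
qed

lemma irwin_sum_eq_suminf:
  assumes "2 \<le> b" "d < b"
  shows "irwin_sum b d k = suminf (irwin_term b d k)"
  using has_sum_irwin[OF assms] by (simp add: irwin_sum_def has_sum_iff)

lemma irwin_sum_bounds:
  assumes "2 \<le> b" "d < b" "1 \<le> k"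
  shows "real b * ln (real b) \<le> irwin_sum b d k"
    and "irwin_sum b d k \<le> real b * ln (real b) + irwin_sum b d k / real b ^ (k - 1)"
proof -
  let ?F = "irwin_term b d k" and ?P = "log_length_child b d k"
  let ?R = "\<lambda>n. ?F n - real b * ?P n"
  have P: "(\<lambda>n. real b * ?P n) sums (real b * ln (real b))"
    using log_length_child_sums[OF assms] by (rule sums_mult)
  have F: "?F sums irwin_sum b d k"
    using summable_irwin_term[OF assms(1,2)] by (simp add: irwin_sum_eq_suminf[OF assms(1,2)] summable_sums)
  have R: "?R sums (irwin_sum b d k - real b * ln (real b))"
    using sums_diff[OF F P] .
  have "?R n \<le> ?F n / real b ^ (k - 1)" for n
  proof -
    have "?R n \<le> ?F n * ?F n"
      using irwin_term_minus_child_bounds(2)[OF assms(2)] by (simp add: power2_eq_square)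
    also have "\<dots> \<le> ?F n * (1 / real b ^ (k - 1))"
      by (intro mult_left_mono irwin_term_le_power irwin_term_nonneg assms)
    finally show ?thesis by simp
  qed
  then have "irwin_sum b d k - real b * ln (real b) \<le> irwin_sum b d k / real b ^ (k - 1)"
    using sums_le[OF _ R sums_divide[OF F]] by blast
  moreover have "0 \<le> irwin_sum b d k - real b * ln (real b)"
    using sums_le[OF _ sums_zero R] irwin_term_minus_child_bounds(1)[OF assms(2)] by blast
  ultimately show "real b * ln (real b) \<le> irwin_sum b d k"
    and "irwin_sum b d k \<le> real b * ln (real b) + irwin_sum b d k / real b ^ (k - 1)"
    by simp_all
qed

lemma ex_digit_count_last_digit_pos:
  assumes "2 \<le> b" "d < b" "0 < k \<or> d = 0"
  shows "\<exists>m j. 0 < m \<and> 0 < j \<and> j < b \<and> digit_count b d (b * m + j) = Suc k"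
proof (cases "d = 0")
  case True
  obtain m where "0 < m" "digit_count b d m = Suc k"
    using ex_digit_count[OF assms(1,2), of "Suc k"] by auto
  with True assms(1) have "digit_count b d (b * m + 1) = Suc k"
    using digit_count_snoc[OF assms(1), of 1 m d] by simp
  moreover have "(1::nat) < b"
    using assms(1) by simp
  ultimately show ?thesis
    using \<open>0 < m\<close> zero_less_one by blast
next
  case False
  obtain m where "0 < m" "digit_count b d m = k"
    using ex_digit_count[OF assms(1,2), of k] assms(3) False by auto
  with False assms(1,2) have "digit_count b d (b * m + d) = Suc k"
    by (simp add: digit_count_snoc)
  with \<open>0 < m\<close> False assms(2) show ?thesis
    by blast
qed

lemma irwin_term_parent:
  assumes "2 \<le> b" "j < b" "0 < m" "digit_count b d (b * m + j) = Suc k"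
  shows "(if j = d then irwin_term b d k m else irwin_term b d (Suc k) m) = 1 / real m"
  using assms digit_count_snoc[OF assms(1,2), of m d] by (auto simp: irwin_term_def split: if_splits)

text \<open>For \<open>m = 0\<close> the children are the single digits; the last hypothesis keeps them out of
  \<open>H (k + 1)\<close>.\<close>

lemma irwin_term_block_le:
  assumes "2 \<le> b" "j < b" "0 < k \<or> d = 0"
  shows "irwin_term b d (Suc k) (b * m + j)
    \<le> (if j = d then irwin_term b d k m else irwin_term b d (Suc k) m) / real b"
proof (cases "0 < m \<and> digit_count b d (b * m + j) = Suc k")
  case True
  then have "1 / real (b * m + j) \<le> 1 / real m / real b"
    using assms(1) by (simp add: frac_le)
  with True assms(1,2) show ?thesis
    by (simp add: irwin_term_parent irwin_term_def)
next
  case False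
  have "digit_count b d (b * m + j) \<noteq> Suc k" if "m = 0" "0 < j"
    using that assms digit_count_snoc[OF assms(1,2), of m d] by auto
  with False have "irwin_term b d (Suc k) (b * m + j) = 0"
    by (cases "m = 0 \<and> j = 0") (auto simp: irwin_term_def)
  then show ?thesis
    by (simp add: irwin_term_nonneg)
qed

lemma irwin_term_block_less:
  assumes "2 \<le> b" "0 < m" "0 < j" "j < b" "digit_count b d (b * m + j) = Suc k"
  shows "irwin_term b d (Suc k) (b * m + j)
    < (if j = d then irwin_term b d k m else irwin_term b d (Suc k) m) / real b"
proof -
  have "1 / real (b * m + j) < 1 / real m / real b"
    using assms by (simp add: frac_less2)
  with assms show ?thesis
    by (simp add: irwin_term_parent irwin_term_def)
qed

lemma sums_less:
  fixes f g :: "nat \<Rightarrow> real"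
  assumes "f sums s" "g sums t" "\<And>n. f n \<le> g n" "f i < g i"
  shows "s < t"
proof -
  have "0 < suminf (\<lambda>n. g n - f n)"
    using assms by (intro suminf_pos2[of _ i]) (auto simp: sums_iff intro: summable_diff)
  moreover have "(\<lambda>n. g n - f n) sums (t - s)"
    using assms(1,2) by (rule sums_diff[rotated])
  ultimately show ?thesis
    by (simp add: sums_iff)
qed

lemma sum_if_eq_else:
  fixes x y :: real
  assumes "d < b"
  shows "(\<Sum>j<b. if j = d then x else y) = x + (real b - 1) * y"
proof -
  have "(\<Sum>j<b. if j = d then x else y) = (\<Sum>j<b. y + (if j = d then x - y else 0))"
    by (intro sum.cong) auto
  with assms show ?thesis
    by (simp add: sum.distrib algebra_simps)
qed

lemma irwin_sum_Suc_less:
  assumes "2 \<le> b" "d < b" "0 < k \<or> d = 0"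
  shows "irwin_sum b d (Suc k) < irwin_sum b d k"
proof -
  let ?H = "irwin_sum b d" and ?F = "irwin_term b d"
  let ?parent = "\<lambda>m j. (if j = d then ?F k m else ?F (Suc k) m) / real b"
  have F: "?F k' sums ?H k'" for k'
    using summable_irwin_term[OF assms(1,2)] by (simp add: irwin_sum_eq_suminf[OF assms(1,2)] summable_sums)
  have "(\<lambda>m. \<Sum>n\<in>{m * b..<m * b + b}. ?F (Suc k) n) sums ?H (Suc k)"
    using assms(1) by (intro sums_group F) simp
  then have blocks: "(\<lambda>m. \<Sum>j<b. ?F (Suc k) (b * m + j)) sums ?H (Suc k)"
    by (simp add: sum.atLeastLessThan_shift_0 atLeast0LessThan mult.commute)
  have "(\<lambda>m. (?F k m + (real b - 1) * ?F (Suc k) m) / real b) sums ((?H k + (real b - 1) * ?H (Suc k)) / real b)"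
    by (intro sums_divide sums_add sums_mult F)
  moreover have "(\<Sum>j<b. ?parent m j) = (?F k m + (real b - 1) * ?F (Suc k) m) / real b" for m
    using sum_if_eq_else[OF assms(2), of "?F k m" "?F (Suc k) m"]
    by (simp add: sum_divide_distrib[symmetric] del: sum_divide_distrib)
  ultimately have parents: "(\<lambda>m. \<Sum>j<b. ?parent m j) sums ((?H k + (real b - 1) * ?H (Suc k)) / real b)"
    by simp
  obtain m j where mj: "0 < m" "0 < j" "j < b" "digit_count b d (b * m + j) = Suc k"
    using ex_digit_count_last_digit_pos[OF assms] by blast
  have "?H (Suc k) < (?H k + (real b - 1) * ?H (Suc k)) / real b"
  proof (rule sums_less[OF blocks parents])
    have le: "?F (Suc k) (b * n + j) \<le> ?parent n j" if "j < b" for n j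
      using assms(1) that assms(3) by (rule irwin_term_block_le)
    then show "(\<Sum>j<b. ?F (Suc k) (b * n + j)) \<le> (\<Sum>j<b. ?parent n j)" for n
      by (intro sum_mono) simp
    show "(\<Sum>j<b. ?F (Suc k) (b * m + j)) < (\<Sum>j<b. ?parent m j)"
      using le irwin_term_block_less[OF assms(1) mj] mj(3)
      by (intro sum_strict_mono_ex1) (auto simp only: lessThan_iff finite_lessThan)
  qed
  with assms(1) show ?thesis
    by (simp add: field_simps)
qed

lemma irwin_sum_le_irwin_sum_1:
  assumes "2 \<le> b" "d < b" "1 \<le> k"
  shows "irwin_sum b d k \<le> irwin_sum b d 1"
  using assms(3)
proof (induction k rule: dec_induct)
  case (step k)
  then show ?case
    using irwin_sum_Suc_less[OF assms(1,2), of k] by simp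
qed simp

lemma irwin_sum_tendsto:
  assumes "2 \<le> b" "d < b"
  shows "irwin_sum b d \<longlonglongrightarrow> real b * ln (real b)"
proof (rule tendsto_sandwich)
  let ?L = "real b * ln (real b)" and ?H = "irwin_sum b d"
  show "\<forall>\<^sub>F k in sequentially. ?L \<le> ?H k"
    using eventually_ge_at_top[of 1] by eventually_elim (rule irwin_sum_bounds(1)[OF assms])
  show "\<forall>\<^sub>F k in sequentially. ?H k \<le> ?L + real b * ?H 1 * inverse (real b ^ k)"
    using eventually_ge_at_top[of 1]
  proof eventually_elim
    case (elim k)
    have "?H k \<le> ?L + ?H k / real b ^ (k - 1)"
      by (rule irwin_sum_bounds(2)[OF assms elim])
    also have "\<dots> \<le> ?L + ?H 1 / real b ^ (k - 1)"
      using irwin_sum_le_irwin_sum_1[OF assms elim] by (simp add: divide_right_mono)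
    also have "real b ^ k = real b * real b ^ (k - 1)"
      using elim by (simp add: power_eq_if)
    then have "?H 1 / real b ^ (k - 1) = real b * ?H 1 * inverse (real b ^ k)"
      using assms(1) by (simp add: field_simps)
    finally show ?case .
  qed
  have "(\<lambda>k. ?L + real b * ?H 1 * inverse (real b ^ k)) \<longlonglongrightarrow> ?L + real b * ?H 1 * 0"
    using assms(1) by (intro tendsto_intros LIMSEQ_inverse_realpow_zero) simp
  then show "(\<lambda>k. ?L + real b * ?H 1 * inverse (real b ^ k)) \<longlonglongrightarrow> ?L"
    by simp
qed simp

theorem mainTheorem3:
  fixes b d :: nat
  assumes "b \<ge> 2" and "d < b"
  shows "(\<forall>k. (\<lambda>n. 1 / real n) summable_on {n. n \<ge> 1 \<and> digit_count b d n = k})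
    \<and> (d \<noteq> 0 \<longrightarrow> (\<forall>k\<ge>1. irwin_sum b d (Suc k) < irwin_sum b d k))
    \<and> (d = 0 \<longrightarrow> (\<forall>k. irwin_sum b d (Suc k) < irwin_sum b d k))
    \<and> (\<lambda>k. irwin_sum b d k) \<longlonglongrightarrow> real b * ln (real b)"
  using has_sum_irwin[OF assms] irwin_sum_Suc_less[OF assms] irwin_sum_tendsto[OF assms]
  by (auto simp: has_sum_iff)

end
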